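(* Let $\mathbf{X}\sim\mathcal{N}(\mathbf{0}_n,\mathbf{I}_n)$ and let $\mathbf{Y}|\mathbf{X}=\mathbf{x}\sim\mathcal{N}(\mathbf{x},\sigma^2\mathbf{I}_n)$ with fixed $\sigma>0$. Then $$\lim_{n\to\infty}\frac{\mathrm{mmse}(\vec{\mathbf{X}}|\vec{\mathbf{Y}})}{n}=\lim_{n\to\infty}\frac{\mathrm{mmse}(\vec{\mathbf{X}}|\mathbf{Y})}{n}=0.$$
   Context: $\vec{\mathbf{X}},\vec{\mathbf{Y}}$ are $\mathbf{X},\mathbf{Y}$ with entries sorted in ascending order. For random vectors $\mathbf{V},\mathbf{U}$, $\mathrm{mmse}(\mathbf{V}|\mathbf{U})=\mathbb{E}\left[\|\mathbf{V}-\mathbb{E}[\mathbf{V}|\mathbf{U}]\|^2\right]$ with $\|\cdot\|$ the Euclidean norm. *)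

theory Defs
  imports "HOL-Probability.Probability"
begin

definition std_normal :: "real measure" where
  "std_normal = density lborel std_normal_density"

text \<open>Probability space for dimension n: outcome (x, z) with x, z independent
  standard normal vectors in R^n (coordinates indexed by {..<n}).
  Then X = x ~ N(0, I_n) and Y = x + sigma z, so Y | X = x ~ N(x, sigma^2 I_n).\<close>
definition Omega :: "nat \<Rightarrow> ((nat \<Rightarrow> real) \<times> (nat \<Rightarrow> real)) measure" where
  "Omega n = (PiM {..<n} (\<lambda>_. std_normal)) \<Otimes>\<^sub>M (PiM {..<n} (\<lambda>_. std_normal))"

definition Xv :: "nat \<Rightarrow> (nat \<Rightarrow> real) \<times> (nat \<Rightarrow> real) \<Rightarrow> real" where
  "Xv i \<omega> = fst \<omega> i"

definition Yv :: "real \<Rightarrow> nat \<Rightarrow> (nat \<Rightarrow> real) \<times> (nat \<Rightarrow> real) \<Rightarrow> real" where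
  "Yv \<sigma> i \<omega> = fst \<omega> i + \<sigma> * snd \<omega> i"

definition sort_vec :: "nat \<Rightarrow> (nat \<Rightarrow> 'a \<Rightarrow> real) \<Rightarrow> nat \<Rightarrow> 'a \<Rightarrow> real" where
  "sort_vec n V i \<omega> = sort (map (\<lambda>j. V j \<omega>) [0..<n]) ! i"

definition gen_sigma :: "'a measure \<Rightarrow> nat \<Rightarrow> (nat \<Rightarrow> 'a \<Rightarrow> real) \<Rightarrow> 'a measure" where
  "gen_sigma M n U = sigma (space M) {U i -` B \<inter> space M | i B. i < n \<and> B \<in> sets borel}"

definition mmse :: "'a measure \<Rightarrow> nat \<Rightarrow> (nat \<Rightarrow> 'a \<Rightarrow> real) \<Rightarrow> (nat \<Rightarrow> 'a \<Rightarrow> real) \<Rightarrow> real" where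
  "mmse M n V U = (\<integral>\<omega>. (\<Sum>i<n. (V i \<omega> - real_cond_exp M (gen_sigma M n U) (V i) \<omega>)\<^sup>2) \<partial>M)"

end

theory Submission
  imports Defs "HOL-Real_Asymp.Real_Asymp"
begin

text \<open>Since E[V | U] minimizes the mean squared error among U-measurable estimators, the mmse
  of the sorted vector given any observation is at most its mean squared distance to a fixed
  vector c. To choose c, quantize the entries to a
  grid of mesh 2K/m on [-K, K]. The quantized i-th order statistic is determined by the counts
  N_j of entries below the grid points, and each N_j deviates from its mean by O(sqrt n) in L1.
  Taking for c the profile built from the rounded mean counts gives
  E ||sorted X - c||^2 <= 2 n ((2K/m)^2 + 12/K^2) + 8 K^2 (1 + sqrt n), and K = k, m = 2 k^2
  with first n and then k tending to infinity gives the limit 0.\<close>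

definition order_stat :: "nat \<Rightarrow> (nat \<Rightarrow> real) \<Rightarrow> nat \<Rightarrow> real" where
  "order_stat n x i = sort (map x [0..<n]) ! i"

lemma sort_vec_eq_order_stat: "sort_vec n V i \<omega> = order_stat n (\<lambda>j. V j \<omega>) i"
  unfolding sort_vec_def order_stat_def ..

lemma sorted_nth_le_iff_less_length_filter:
  fixes ys :: "'a::linorder list"
  assumes "sorted ys" "i < length ys"
  shows "ys ! i \<le> t \<longleftrightarrow> i < length (filter (\<lambda>y. y \<le> t) ys)"
  using assms
proof (induction ys arbitrary: i)
  case Nil
  then show ?case by simp
next
  case (Cons y ys)
  show ?case
  proof (cases "y \<le> t")
    case True
    then show ?thesis using Cons by (cases i) auto
  next
    case False
    then have "\<forall>z\<in>set (y # ys). t < z" using Cons.prems by auto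
    then have "filter (\<lambda>y. y \<le> t) ys = []" and "t < (y # ys) ! i"
      using Cons.prems(2) nth_mem[of i "y # ys"] by (auto simp: filter_empty_conv)
    with False show ?thesis by auto
  qed
qed

lemma order_stat_le_iff:
  assumes "i < n"
  shows "order_stat n x i \<le> t \<longleftrightarrow> i < card {k. k < n \<and> x k \<le> t}"
proof -
  have "length (filter (\<lambda>y. y \<le> t) (sort (map x [0..<n])))
      = length (filter (\<lambda>y. y \<le> t) (map x [0..<n]))"
    by (metis mset_filter mset_sort size_mset)
  also have "\<dots> = card {k. k < n \<and> x k \<le> t}"
    by (simp add: length_filter_conv_card) (rule arg_cong[where f = card], auto)
  finally show ?thesis
    unfolding order_stat_def using assms
    by (subst sorted_nth_le_iff_less_length_filter) auto
qed

lemma sum_order_stat: "(\<Sum>i<n. h (order_stat n x i)) = (\<Sum>k<n. h (x k))"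
proof -
  have "(\<Sum>i<n. h (order_stat n x i)) = sum_list (map h (sort (map x [0..<n])))"
    unfolding order_stat_def by (simp add: sum_list_sum_nth atLeast0LessThan)
  also have "\<dots> = sum_list (map h (map x [0..<n]))"
    by (metis mset_map mset_sort sum_mset_sum_list)
  finally show ?thesis
    by (simp add: sum_list_sum_nth atLeast0LessThan)
qed

lemma real_card_less_and_eq_sum:
  fixes m :: nat
  shows "real (card {j. j < m \<and> P j}) = (\<Sum>j<m. of_bool (P j))"
  using sum_of_bool_eq[of "{..<m}" P] by (simp add: Collect_conj_eq lessThan_def Int_commute)

lemma card_less_and_le: "card {j. j < m \<and> P j} \<le> m"
  using card_mono[of "{..<m}" "{j. j < m \<and> P j}"] by auto

lemma real_card_le_eq_sum_indicator:
  fixes x :: "nat \<Rightarrow> real"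
  shows "real (card {k. k < n \<and> x k \<le> t}) = (\<Sum>k<n. indicator {..t} (x k))"
  unfolding real_card_less_and_eq_sum by (simp add: indicator_def)

lemma borel_measurable_order_stat [measurable]:
  assumes "i < n" and [measurable]: "\<And>j. j < n \<Longrightarrow> f j \<in> borel_measurable M"
  shows "(\<lambda>\<omega>. order_stat n (\<lambda>j. f j \<omega>) i) \<in> borel_measurable M"
proof -
  have [measurable]: "f j \<in> borel_measurable M" if "j \<in> {..<n}" for j
    using that by simp
  have "order_stat n (\<lambda>j. f j \<omega>) i \<le> a \<longleftrightarrow> real i < (\<Sum>k<n. indicator {..a} (f k \<omega>))" for a \<omega>
    by (simp add: order_stat_le_iff[OF assms(1)] flip: real_card_le_eq_sum_indicator)
  then show ?thesis
    by (simp add: borel_measurable_iff_le)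
qed

lemma sum_abs_diff_of_bool_le:
  "(\<Sum>i<n. \<bar>of_bool (N \<le> i) - of_bool (M \<le> i) :: real\<bar>) \<le> \<bar>real N - real M\<bar>"
proof -
  have "(\<Sum>i<n. \<bar>of_bool (N \<le> i) - of_bool (M \<le> i) :: real\<bar>)
      = (\<Sum>i<n. of_bool (i \<in> {min N M..<max N M}))"
    by (rule sum.cong) auto
  also have "\<dots> = real (card ({..<n} \<inter> {min N M..<max N M}))"
    by (simp add: Int_def)
  also have "\<dots> \<le> real (card {min N M..<max N M})"
    by (simp add: card_mono del: card_atLeastLessThan)
  finally show ?thesis by (simp add: of_nat_diff)
qed

definition grid :: "real \<Rightarrow> nat \<Rightarrow> nat \<Rightarrow> real" where
  "grid K m j = -K + real j * (2 * K / real m)"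

text \<open>Rounds y up to the next of the grid points -K + j (2K/m), 0 \<le> j \<le> m, and to K if y > K.\<close>
definition quantize :: "real \<Rightarrow> nat \<Rightarrow> real \<Rightarrow> real" where
  "quantize K m y = grid K m (card {j. j < m \<and> grid K m j < y})"

lemma grid_diff: "grid K m a - grid K m b = (real a - real b) * (2 * K / real m)"
  unfolding grid_def by (simp add: left_diff_distrib diff_divide_distrib)

lemma abs_grid_le:
  assumes "K \<ge> 0" "j \<le> m"
  shows "\<bar>grid K m j\<bar> \<le> K"
proof -
  have "real j * (2 * K / real m) \<le> real m * (2 * K / real m)"
    using assms by (intro mult_right_mono) auto
  also have "\<dots> \<le> 2 * K"
    using assms by (cases "m = 0") auto
  finally have "real j * (2 * K / real m) \<le> 2 * K" .
  moreover have "0 \<le> real j * (2 * K / real m)"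
    using assms by simp
  ultimately show ?thesis
    unfolding grid_def by linarith
qed

lemma abs_quantize_le: "K \<ge> 0 \<Longrightarrow> \<bar>quantize K m y\<bar> \<le> K"
  unfolding quantize_def by (rule abs_grid_le) (simp_all add: card_less_and_le)

lemma quantize_eq_ceiling:
  assumes "K > 0" "m > 0" "\<bar>y\<bar> \<le> K"
  defines "d \<equiv> 2 * K / real m"
  shows "quantize K m y = -K + d * \<lceil>(y + K) / d\<rceil>"
proof -
  define r where "r = (y + K) / d"
  have d: "d > 0" using assms by (simp add: d_def)
  have "0 \<le> r"
    using assms d unfolding r_def by simp
  moreover have "r \<le> 2 * K / d"
    using assms d unfolding r_def by (intro divide_right_mono) auto
  moreover have "2 * K / d = real m"
    using assms unfolding d_def by simp
  ultimately have r: "0 \<le> r" "r \<le> real m" by simp_all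
  have below_y: "grid K m j < y \<longleftrightarrow> j < nat \<lceil>r\<rceil>" for j
  proof -
    have "grid K m j < y \<longleftrightarrow> real j * d < y + K"
      unfolding grid_def d_def by linarith
    also have "\<dots> \<longleftrightarrow> real j < r"
      using d unfolding r_def by (simp add: pos_less_divide_eq)
    also have "\<dots> \<longleftrightarrow> j < nat \<lceil>r\<rceil>"
      using r by linarith
    finally show ?thesis .
  qed
  have "{j. j < m \<and> grid K m j < y} = {j. j < m \<and> j < nat \<lceil>r\<rceil>}"
    by (simp only: below_y)
  also have "\<dots> = {..<nat \<lceil>r\<rceil>}"
    using r by (auto simp: nat_le_iff ceiling_le_iff dest: less_le_trans)
  finally show ?thesis
    using r unfolding quantize_def grid_def d_def r_def by simp
qed

lemma abs_diff_quantize_le: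
  assumes "K > 0" "m > 0" "\<bar>y\<bar> \<le> K"
  shows "\<bar>y - quantize K m y\<bar> \<le> 2 * K / real m"
proof -
  define d where "d = 2 * K / real m"
  define r where "r = (y + K) / d"
  have d: "d > 0" using assms by (simp add: d_def)
  have "y = -K + d * r" using d unfolding r_def by simp
  then have "\<bar>y - quantize K m y\<bar> = \<bar>d * (\<lceil>r\<rceil> - r)\<bar>"
    using quantize_eq_ceiling[OF assms] unfolding r_def d_def
    by (simp add: right_diff_distrib abs_minus_commute)
  also have "\<dots> = d * (\<lceil>r\<rceil> - r)"
    using d by simp
  also have "\<dots> \<le> d"
    using d by (intro mult_left_le) linarith+
  finally show ?thesis unfolding d_def .
qed

text \<open>Inside [-K, K] the error is at most the mesh; outside it is at most 2|y|, and
  |y| > K turns y^2 into at most y^4 / K^2.\<close>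
lemma sq_diff_quantize_le:
  assumes "K > 0" "m > 0"
  shows "(y - quantize K m y)\<^sup>2 \<le> (2 * K / real m)\<^sup>2 + 4 * y ^ 4 / K\<^sup>2"
proof (cases "\<bar>y\<bar> \<le> K")
  case True
  then have "(y - quantize K m y)\<^sup>2 \<le> (2 * K / real m)\<^sup>2"
    using abs_diff_quantize_le[OF assms True] by (metis abs_ge_zero power2_abs power_mono)
  then show ?thesis by (simp add: add_increasing2)
next
  case False
  have "\<bar>y - quantize K m y\<bar> \<le> \<bar>2 * y\<bar>"
    using abs_quantize_le[of K m y] assms False by linarith
  then have "\<bar>y - quantize K m y\<bar>\<^sup>2 \<le> \<bar>2 * y\<bar>\<^sup>2"
    by (intro power_mono) auto
  then have "(y - quantize K m y)\<^sup>2 \<le> 4 * y\<^sup>2"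
    by (simp add: power_mult_distrib)
  also have "\<dots> \<le> 4 * y ^ 4 / K\<^sup>2"
  proof -
    have "K\<^sup>2 \<le> y\<^sup>2" using False assms abs_le_square_iff[of K y] by simp
    then have "K\<^sup>2 * y\<^sup>2 \<le> y\<^sup>2 * y\<^sup>2"
      by (rule mult_right_mono) simp
    then have "y\<^sup>2 \<le> y ^ 4 / K\<^sup>2"
      using assms by (simp add: pos_le_divide_eq mult.commute flip: power_add)
    then show ?thesis by simp
  qed
  finally show ?thesis by (simp add: add_increasing)
qed

lemma quantize_order_stat:
  assumes "i < n"
  shows "quantize K m (order_stat n x i)
    = grid K m (card {j. j < m \<and> card {k. k < n \<and> x k \<le> grid K m j} \<le> i})"
proof -
  have "grid K m j < order_stat n x i \<longleftrightarrow> card {k. k < n \<and> x k \<le> grid K m j} \<le> i" for j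
    using order_stat_le_iff[OF assms, of x "grid K m j"] by (metis not_le)
  then show ?thesis
    unfolding quantize_def by simp
qed

lemma sum_abs_diff_card_le:
  fixes N M :: "nat \<Rightarrow> nat"
  shows "(\<Sum>i<n. \<bar>real (card {j. j < m \<and> N j \<le> i}) - real (card {j. j < m \<and> M j \<le> i})\<bar>)
    \<le> (\<Sum>j<m. \<bar>real (N j) - real (M j)\<bar>)"
proof -
  have "(\<Sum>i<n. \<bar>real (card {j. j < m \<and> N j \<le> i}) - real (card {j. j < m \<and> M j \<le> i})\<bar>)
      = (\<Sum>i<n. \<bar>\<Sum>j<m. of_bool (N j \<le> i) - of_bool (M j \<le> i)\<bar>)"
    by (simp add: real_card_less_and_eq_sum sum_subtractf)
  also have "\<dots> \<le> (\<Sum>i<n. \<Sum>j<m. \<bar>of_bool (N j \<le> i) - of_bool (M j \<le> i)\<bar>)"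
    by (intro sum_mono sum_abs)
  also have "\<dots> = (\<Sum>j<m. \<Sum>i<n. \<bar>of_bool (N j \<le> i) - of_bool (M j \<le> i)\<bar>)"
    by (rule sum.swap)
  also have "\<dots> \<le> (\<Sum>j<m. \<bar>real (N j) - real (M j)\<bar>)"
    by (intro sum_mono sum_abs_diff_of_bool_le)
  finally show ?thesis .
qed

lemma sq_diff_le_two_sq: "(a - c)\<^sup>2 \<le> 2 * (a - b)\<^sup>2 + 2 * (b - c)\<^sup>2" for a b c :: real
  using sum_squares_ge_zero[of "a - 2 * b + c" 0] by (simp add: power2_eq_square algebra_simps)

lemma sq_diff_grid_le:
  assumes "K \<ge> 0" "a \<le> m" "b \<le> m"
  shows "(grid K m a - grid K m b)\<^sup>2 \<le> 2 * K * (2 * K / real m) * \<bar>real a - real b\<bar>"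
proof -
  let ?g = "grid K m a - grid K m b"
  have bound: "\<bar>?g\<bar> \<le> 2 * K"
    using abs_grid_le[of K a m] abs_grid_le[of K b m] assms by simp
  have "?g\<^sup>2 = \<bar>?g\<bar> * \<bar>?g\<bar>"
    by (simp add: power2_eq_square)
  also have "\<dots> \<le> 2 * K * \<bar>?g\<bar>"
    using bound by (rule mult_right_mono) simp
  also have "\<bar>?g\<bar> = 2 * K / real m * \<bar>real a - real b\<bar>"
    using assms(1) by (simp add: grid_diff abs_mult)
  finally show ?thesis
    by (simp add: mult.assoc)
qed

text \<open>The quantized order statistics are the grid points indexed by the empirical counts
  below the grid; replacing these counts by deterministic ones M costs at most their
  total deviation.\<close>
lemma sum_sq_order_stat_dev_le:
  assumes "K \<ge> 0"
  shows "(\<Sum>i<n. (order_stat n x i - grid K m (card {j. j < m \<and> M j \<le> i}))\<^sup>2)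
    \<le> 2 * (\<Sum>k<n. (x k - quantize K m (x k))\<^sup>2)
      + 4 * K * (2 * K / real m) * (\<Sum>j<m. \<bar>real (card {k. k < n \<and> x k \<le> grid K m j}) - real (M j)\<bar>)"
proof -
  define N where "N j = card {k. k < n \<and> x k \<le> grid K m j}" for j
  define A where "A i = card {j. j < m \<and> N j \<le> i}" for i
  define B where "B i = card {j. j < m \<and> M j \<le> i}" for i
  have "(order_stat n x i - grid K m (B i))\<^sup>2
      \<le> 2 * (order_stat n x i - quantize K m (order_stat n x i))\<^sup>2
        + 4 * K * (2 * K / real m) * \<bar>real (A i) - real (B i)\<bar>" if "i < n" for i
  proof -
    have "quantize K m (order_stat n x i) = grid K m (A i)"
      using quantize_order_stat[OF that] unfolding A_def N_def .
    then show ?thesis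
      using sq_diff_le_two_sq[of "order_stat n x i" "grid K m (B i)" "grid K m (A i)"]
        sq_diff_grid_le[OF assms, where a = "A i" and b = "B i" and m = m]
      unfolding A_def B_def by (simp add: card_less_and_le)
  qed
  then have "(\<Sum>i<n. (order_stat n x i - grid K m (B i))\<^sup>2)
      \<le> (\<Sum>i<n. 2 * (order_stat n x i - quantize K m (order_stat n x i))\<^sup>2
        + 4 * K * (2 * K / real m) * \<bar>real (A i) - real (B i)\<bar>)"
    by (intro sum_mono) simp
  also have "\<dots> = 2 * (\<Sum>k<n. (x k - quantize K m (x k))\<^sup>2)
      + 4 * K * (2 * K / real m) * (\<Sum>i<n. \<bar>real (A i) - real (B i)\<bar>)"
    by (simp only: sum.distrib sum_order_stat[where h = "\<lambda>y. (y - quantize K m y)\<^sup>2"]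
        flip: sum_distrib_left)
  also have "\<dots> \<le> 2 * (\<Sum>k<n. (x k - quantize K m (x k))\<^sup>2)
      + 4 * K * (2 * K / real m) * (\<Sum>j<m. \<bar>real (N j) - real (M j)\<bar>)"
    using sum_abs_diff_card_le[where N = N and M = M and m = m and n = n] assms
    unfolding A_def B_def by (intro add_left_mono mult_left_mono) auto
  finally show ?thesis
    unfolding B_def N_def .
qed

lemma integrable_PiM_component:
  fixes h :: "'a \<Rightarrow> 'b::{banach, second_countable_topology}"
  assumes "\<And>i. i \<in> I \<Longrightarrow> prob_space (M i)" "k \<in> I" "integrable (M k) h"
  shows "integrable (PiM I M) (\<lambda>x. h (x k))"
proof -
  have "distr (PiM I M) (M k) (\<lambda>x. x k) = M k"
    by (rule distr_PiM_component) (use assms in auto)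
  then show ?thesis
    using integrable_distr_eq[of "\<lambda>x. x k" "PiM I M" "M k" h] assms(2,3) by simp
qed

lemma integral_PiM_component:
  fixes h :: "'a \<Rightarrow> 'b::{banach, second_countable_topology}"
  assumes "\<And>i. i \<in> I \<Longrightarrow> prob_space (M i)" "k \<in> I" "h \<in> borel_measurable (M k)"
  shows "(\<integral>x. h (x k) \<partial>PiM I M) = (\<integral>y. h y \<partial>M k)"
proof -
  have "distr (PiM I M) (M k) (\<lambda>x. x k) = M k"
    by (rule distr_PiM_component) (use assms in auto)
  then show ?thesis
    using integral_distr[of "\<lambda>x. x k" "PiM I M" "M k" h] assms(2,3) by simp
qed

lemma integral_PiM_two_components:
  fixes f g :: "'a \<Rightarrow> real"
  assumes \<mu>: "prob_space \<mu>" and I: "finite I" "k \<in> I" "l \<in> I" "k \<noteq> l"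
    and fg: "integrable \<mu> f" "integrable \<mu> g"
  shows "(\<integral>x. f (x k) * g (x l) \<partial>PiM I (\<lambda>_. \<mu>)) = (\<integral>y. f y \<partial>\<mu>) * (\<integral>y. g y \<partial>\<mu>)"
proof -
  interpret product_sigma_finite "\<lambda>_. \<mu>"
    unfolding product_sigma_finite_def using \<mu> prob_space_imp_sigma_finite by auto
  define F where "F i = (if i = k then f else if i = l then g else (\<lambda>_. 1))" for i
  have "(\<Prod>i\<in>I. F i (x i)) = f (x k) * g (x l)" for x
  proof -
    have "(\<Prod>i\<in>I. F i (x i)) = (\<Prod>i\<in>{k, l}. F i (x i))"
      using I by (intro prod.mono_neutral_right) (auto simp: F_def)
    then show ?thesis using I by (simp add: F_def)
  qed
  moreover have "(\<Prod>i\<in>I. integral\<^sup>L \<mu> (F i)) = (\<integral>y. f y \<partial>\<mu>) * (\<integral>y. g y \<partial>\<mu>)"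
  proof -
    have "(\<Prod>i\<in>I. integral\<^sup>L \<mu> (F i)) = (\<Prod>i\<in>{k, l}. integral\<^sup>L \<mu> (F i))"
      using I \<mu> by (intro prod.mono_neutral_right) (auto simp: F_def prob_space.prob_space)
    then show ?thesis using I by (simp add: F_def)
  qed
  moreover have "integrable \<mu> (F i)" for i
    using fg \<mu> by (simp add: F_def prob_space.finite_measure finite_measure.integrable_const)
  ultimately show ?thesis
    using product_integral_prod[of I F] I by simp
qed

lemma integral_sum_PiM_components:
  fixes g :: "'a \<Rightarrow> real"
  assumes "prob_space \<mu>" "integrable \<mu> g"
  shows "integrable (PiM {..<n} (\<lambda>_. \<mu>)) (\<lambda>x. \<Sum>k<n. g (x k))"
    and "(\<integral>x. (\<Sum>k<n. g (x k)) \<partial>PiM {..<n} (\<lambda>_. \<mu>)) = real n * (\<integral>y. g y \<partial>\<mu>)"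
proof -
  have g_int: "integrable (PiM {..<n} (\<lambda>_. \<mu>)) (\<lambda>x. g (x k))" if "k < n" for k
    using assms that by (intro integrable_PiM_component) auto
  then show "integrable (PiM {..<n} (\<lambda>_. \<mu>)) (\<lambda>x. \<Sum>k<n. g (x k))"
    by (intro Bochner_Integration.integrable_sum) auto
  have "(\<integral>x. (\<Sum>k<n. g (x k)) \<partial>PiM {..<n} (\<lambda>_. \<mu>)) = (\<Sum>k<n. \<integral>x. g (x k) \<partial>PiM {..<n} (\<lambda>_. \<mu>))"
    using g_int by (intro Bochner_Integration.integral_sum) auto
  also have "\<dots> = (\<Sum>k<n. \<integral>y. g y \<partial>\<mu>)"
    using assms by (intro sum.cong refl integral_PiM_component) auto
  finally show "(\<integral>x. (\<Sum>k<n. g (x k)) \<partial>PiM {..<n} (\<lambda>_. \<mu>)) = real n * (\<integral>y. g y \<partial>\<mu>)"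
    by simp
qed

text \<open>Independence kills the cross terms.\<close>
lemma integral_sq_sum_centered_PiM_le:
  fixes h :: "'a \<Rightarrow> real"
  assumes \<mu>: "prob_space \<mu>" and h: "h \<in> borel_measurable \<mu>" "\<And>y. \<bar>h y\<bar> \<le> 1" "(\<integral>y. h y \<partial>\<mu>) = 0"
  shows "integrable (PiM {..<n} (\<lambda>_. \<mu>)) (\<lambda>x. (\<Sum>k<n. h (x k))\<^sup>2)"
    and "(\<integral>x. (\<Sum>k<n. h (x k))\<^sup>2 \<partial>PiM {..<n} (\<lambda>_. \<mu>)) \<le> real n"
proof -
  let ?P = "PiM {..<n} (\<lambda>_. \<mu>)"
  interpret P: prob_space ?P
    using \<mu> by (intro prob_space_PiM)
  have h_int: "integrable \<mu> h"
    using \<mu> h by (intro finite_measure.integrable_const_bound[where B = 1]) (auto simp: prob_space_def)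
  have [measurable]: "(\<lambda>x. h (x k)) \<in> borel_measurable ?P" if "k < n" for k
    using that h(1) by (intro measurable_compose[OF measurable_component_singleton]) auto
  have prod_int: "integrable ?P (\<lambda>x. h (x k) * h (x l))" if "k < n" "l < n" for k l
    using that h(2) by (intro P.integrable_const_bound[where B = 1]) (auto simp: abs_mult intro!: AE_I2 mult_le_one)
  have sq: "(\<Sum>k<n. h (x k))\<^sup>2 = (\<Sum>k<n. \<Sum>l<n. h (x k) * h (x l))" for x
    by (simp add: power2_eq_square sum_product)
  show "integrable ?P (\<lambda>x. (\<Sum>k<n. h (x k))\<^sup>2)"
    unfolding sq using prod_int by (intro Bochner_Integration.integrable_sum) auto
  have "(\<integral>x. (\<Sum>k<n. h (x k))\<^sup>2 \<partial>?P) = (\<Sum>k<n. \<integral>x. (\<Sum>l<n. h (x k) * h (x l)) \<partial>?P)"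
    unfolding sq using prod_int
    by (intro Bochner_Integration.integral_sum Bochner_Integration.integrable_sum) auto
  also have "\<dots> = (\<Sum>k<n. \<Sum>l<n. \<integral>x. h (x k) * h (x l) \<partial>?P)"
    using prod_int by (intro sum.cong refl Bochner_Integration.integral_sum) auto
  also have "\<dots> \<le> (\<Sum>k<n. \<Sum>l<n. of_bool (k = l))"
  proof (intro sum_mono)
    fix k l assume "k \<in> {..<n}" "l \<in> {..<n}"
    then show "(\<integral>x. h (x k) * h (x l) \<partial>?P) \<le> of_bool (k = l)"
    proof (cases "k = l")
      case True
      have "h y * h y \<le> 1" for y
        using h(2)[of y] by (metis abs_ge_zero abs_mult_self_eq mult_le_one)
      then show ?thesis
        using prod_int \<open>k \<in> {..<n}\<close> True by (auto intro!: P.integral_le_const)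
    next
      case False
      then show ?thesis
        using \<open>k \<in> {..<n}\<close> \<open>l \<in> {..<n}\<close> h(3)
          integral_PiM_two_components[OF \<mu> finite_lessThan _ _ False h_int h_int]
        by simp
    qed
  qed
  also have "\<dots> = real n"
    by simp
  finally show "(\<integral>x. (\<Sum>k<n. h (x k))\<^sup>2 \<partial>?P) \<le> real n" .
qed

lemma borel_measurable_PiM_component:
  assumes "sets \<mu> = sets borel" "k \<in> I"
  shows "(\<lambda>x. x k) \<in> borel_measurable (PiM I (\<lambda>_. \<mu>))"
  using measurable_component_singleton[OF assms(2), of "\<lambda>_. \<mu>"]
  by (metis measurable_cong_sets[OF refl assms(1)])

lemma abs_le_sq_div_add:
  fixes u s :: real
  assumes "s > 0"
  shows "\<bar>u\<bar> \<le> u\<^sup>2 / (2 * s) + s / 2"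
  using sum_squares_bound[of s "\<bar>u\<bar>"] assms by (simp add: field_simps power2_eq_square)

text \<open>AM-GM with the scale sqrt n turns the second-moment bound into an L1 bound.\<close>
lemma integral_abs_sum_centered_PiM_le:
  fixes h :: "'a \<Rightarrow> real"
  assumes \<mu>: "prob_space \<mu>" and h: "h \<in> borel_measurable \<mu>" "\<And>y. \<bar>h y\<bar> \<le> 1" "(\<integral>y. h y \<partial>\<mu>) = 0"
    and n: "n > 0"
  shows "integrable (PiM {..<n} (\<lambda>_. \<mu>)) (\<lambda>x. \<bar>\<Sum>k<n. h (x k)\<bar>)"
    and "(\<integral>x. \<bar>\<Sum>k<n. h (x k)\<bar> \<partial>PiM {..<n} (\<lambda>_. \<mu>)) \<le> sqrt (real n)"
proof -
  let ?P = "PiM {..<n} (\<lambda>_. \<mu>)"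
  interpret P: prob_space ?P
    using \<mu> by (intro prob_space_PiM)
  define S where "S x = (\<Sum>k<n. h (x k))" for x
  define s where "s = sqrt (real n)"
  note S_sq = integral_sq_sum_centered_PiM_le[OF \<mu> h, of n, folded S_def]
  have s: "s > 0" "s\<^sup>2 = real n"
    using n unfolding s_def by simp_all
  have [measurable]: "(\<lambda>x. h (x k)) \<in> borel_measurable ?P" if "k \<in> {..<n}" for k
    using that h(1) by (intro measurable_compose[OF measurable_component_singleton]) auto
  have "(\<lambda>x. \<bar>S x\<bar>) \<in> borel_measurable ?P"
    unfolding S_def by measurable
  moreover have bound_int: "integrable ?P (\<lambda>x. (S x)\<^sup>2 / (2 * s) + s / 2)"
    using S_sq(1) by simp
  moreover have bound: "\<bar>S x\<bar> \<le> (S x)\<^sup>2 / (2 * s) + s / 2" for x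
    using abs_le_sq_div_add[OF s(1)] .
  ultimately show int: "integrable ?P (\<lambda>x. \<bar>S x\<bar>)"
    by (intro Bochner_Integration.integrable_bound[OF bound_int])
      (auto intro!: AE_I2 order_trans[OF bound abs_ge_self])
  have "(\<integral>x. \<bar>S x\<bar> \<partial>?P) \<le> (\<integral>x. (S x)\<^sup>2 / (2 * s) + s / 2 \<partial>?P)"
    by (rule integral_mono[OF int bound_int bound])
  also have "\<dots> = (\<integral>x. (S x)\<^sup>2 \<partial>?P) / (2 * s) + s / 2"
    using S_sq(1) by (simp add: P.prob_space)
  also have "\<dots> \<le> real n / (2 * s) + s / 2"
    using S_sq(2) s by (simp add: divide_right_mono)
  also have "real n / (2 * s) + s / 2 = s"
    using s by (simp add: field_simps power2_eq_square)
  finally show "(\<integral>x. \<bar>S x\<bar> \<partial>?P) \<le> sqrt (real n)"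
    unfolding s_def .
qed

lemma integral_abs_count_dev_le:
  fixes t :: real
  assumes \<mu>: "real_distribution \<mu>" and n: "n > 0"
  defines "c \<equiv> nat \<lfloor>real n * cdf \<mu> t\<rfloor>"
  shows "integrable (PiM {..<n} (\<lambda>_. \<mu>)) (\<lambda>x. \<bar>real (card {k. k < n \<and> x k \<le> t}) - real c\<bar>)"
    and "(\<integral>x. \<bar>real (card {k. k < n \<and> x k \<le> t}) - real c\<bar> \<partial>PiM {..<n} (\<lambda>_. \<mu>)) \<le> 1 + sqrt (real n)"
proof -
  interpret \<mu>: real_distribution \<mu> by (rule \<mu>)
  let ?P = "PiM {..<n} (\<lambda>_. \<mu>)"
  interpret P: prob_space ?P
    by (intro prob_space_PiM \<mu>.prob_space_axioms)
  define p where "p = cdf \<mu> t"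
  define h where "h y = indicator {..t} y - p" for y :: real
  define S where "S x = (\<Sum>k<n. h (x k))" for x :: "nat \<Rightarrow> real"
  have p: "0 \<le> p" "p \<le> 1"
    unfolding p_def by (simp_all add: \<mu>.cdf_nonneg \<mu>.cdf_bounded_prob)
  have h_meas: "h \<in> borel_measurable \<mu>"
    unfolding h_def by measurable
  have h_bound: "\<bar>h y\<bar> \<le> 1" for y
    using p unfolding h_def by (auto simp: indicator_def)
  have "(\<integral>y. h y \<partial>\<mu>) = 0"
    unfolding h_def p_def using \<mu>.prob_space
    by (subst Bochner_Integration.integral_diff)
      (auto intro!: integrable_real_indicator simp: cdf_def less_top[symmetric])
  note S_abs = integral_abs_sum_centered_PiM_le[OF \<mu>.prob_space_axioms h_meas h_bound this n, folded S_def]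
  have [measurable]: "(\<lambda>x. x k) \<in> borel_measurable ?P" if "k \<in> {..<n}" for k
    using that by (intro borel_measurable_PiM_component) auto
  have "0 \<le> real n * p"
    using p by simp
  then have c: "real c \<le> real n * p" "real n * p < real c + 1"
    unfolding c_def p_def by linarith+
  have "real (card {k. k < n \<and> x k \<le> t}) = S x + real n * p" for x
    unfolding real_card_le_eq_sum_indicator S_def h_def by (simp add: sum_subtractf)
  then have bound: "\<bar>real (card {k. k < n \<and> x k \<le> t}) - real c\<bar> \<le> \<bar>S x\<bar> + 1" for x
    using c abs_ge_self[of "S x"] abs_ge_minus_self[of "S x"] by (simp add: abs_le_iff)
  have bound_int: "integrable ?P (\<lambda>x. \<bar>S x\<bar> + 1)"
    using S_abs(1) by simp
  show int: "integrable ?P (\<lambda>x. \<bar>real (card {k. k < n \<and> x k \<le> t}) - real c\<bar>)"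
    by (rule Bochner_Integration.integrable_bound[OF bound_int])
      (auto simp: real_card_le_eq_sum_indicator intro!: AE_I2 order_trans[OF _ bound])
  have "(\<integral>x. \<bar>real (card {k. k < n \<and> x k \<le> t}) - real c\<bar> \<partial>?P) \<le> (\<integral>x. \<bar>S x\<bar> + 1 \<partial>?P)"
    by (rule integral_mono[OF int bound_int bound])
  also have "\<dots> \<le> 1 + sqrt (real n)"
    using S_abs by (simp add: P.prob_space)
  finally show "(\<integral>x. \<bar>real (card {k. k < n \<and> x k \<le> t}) - real c\<bar> \<partial>?P) \<le> 1 + sqrt (real n)" .
qed

lemma borel_measurable_quantize [measurable]: "quantize K m \<in> borel_measurable borel"
  unfolding quantize_def grid_def real_card_less_and_eq_sum by measurable

lemma integral_sq_diff_quantize_le: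
  assumes \<mu>: "real_distribution \<mu>" and y4: "integrable \<mu> (\<lambda>y. y ^ 4)" and K: "K > 0" and m: "m > 0"
  shows "integrable \<mu> (\<lambda>y. (y - quantize K m y)\<^sup>2)"
    and "(\<integral>y. (y - quantize K m y)\<^sup>2 \<partial>\<mu>) \<le> (2 * K / real m)\<^sup>2 + 4 * (\<integral>y. y ^ 4 \<partial>\<mu>) / K\<^sup>2"
proof -
  interpret \<mu>: real_distribution \<mu> by (rule \<mu>)
  have bound_int: "integrable \<mu> (\<lambda>y. (2 * K / real m)\<^sup>2 + 4 * y ^ 4 / K\<^sup>2)"
    using y4 by simp
  show int: "integrable \<mu> (\<lambda>y. (y - quantize K m y)\<^sup>2)"
    by (rule Bochner_Integration.integrable_bound[OF bound_int])
      (auto intro!: AE_I2 order_trans[OF _ sq_diff_quantize_le[OF K m]])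
  have "(\<integral>y. (y - quantize K m y)\<^sup>2 \<partial>\<mu>) \<le> (\<integral>y. (2 * K / real m)\<^sup>2 + 4 * y ^ 4 / K\<^sup>2 \<partial>\<mu>)"
    by (rule integral_mono[OF int bound_int sq_diff_quantize_le[OF K m]])
  then show "(\<integral>y. (y - quantize K m y)\<^sup>2 \<partial>\<mu>) \<le> (2 * K / real m)\<^sup>2 + 4 * (\<integral>y. y ^ 4 \<partial>\<mu>) / K\<^sup>2"
    using y4 \<mu>.prob_space by simp
qed

text \<open>The deterministic profile c is the quantized order-statistic vector of a sample whose
  counts below the grid points are the rounded expected counts.\<close>
lemma integral_sum_sq_order_stat_dev_le:
  assumes \<mu>: "real_distribution \<mu>" and y4: "integrable \<mu> (\<lambda>y. y ^ 4)"
    and K: "K > 0" and m: "m > 0" and n: "n > 0"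
  defines "c i \<equiv> grid K m (card {j. j < m \<and> nat \<lfloor>real n * cdf \<mu> (grid K m j)\<rfloor> \<le> i})"
  shows "integrable (PiM {..<n} (\<lambda>_. \<mu>)) (\<lambda>x. \<Sum>i<n. (order_stat n x i - c i)\<^sup>2)"
    and "(\<integral>x. (\<Sum>i<n. (order_stat n x i - c i)\<^sup>2) \<partial>PiM {..<n} (\<lambda>_. \<mu>))
      \<le> 2 * real n * ((2 * K / real m)\<^sup>2 + 4 * (\<integral>y. y ^ 4 \<partial>\<mu>) / K\<^sup>2) + 8 * K\<^sup>2 * (1 + sqrt (real n))"
proof -
  interpret \<mu>: real_distribution \<mu> by (rule \<mu>)
  let ?P = "PiM {..<n} (\<lambda>_. \<mu>)"
  interpret P: prob_space ?P
    by (intro prob_space_PiM \<mu>.prob_space_axioms)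
  have [measurable]: "(\<lambda>x. x k) \<in> borel_measurable ?P" if "k \<in> {..<n}" for k
    using that by (intro borel_measurable_PiM_component) auto
  define M where "M j = nat \<lfloor>real n * cdf \<mu> (grid K m j)\<rfloor>" for j
  define dev where "dev j = (\<lambda>x. \<bar>real (card {k. k < n \<and> x k \<le> grid K m j}) - real (M j)\<bar>)" for j
  define Q where "Q x = (\<Sum>k<n. (x k - quantize K m (x k))\<^sup>2)" for x :: "nat \<Rightarrow> real"
  define D where "D x = (\<Sum>j<m. dev j x)" for x
  define L where "L x = (\<Sum>i<n. (order_stat n x i - c i)\<^sup>2)" for x
  note quantize_error = integral_sq_diff_quantize_le[OF \<mu> y4 K m]
  note Q_sum = integral_sum_PiM_components[OF \<mu>.prob_space_axioms quantize_error(1), of n, folded Q_def]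
  have Q_le: "(\<integral>x. Q x \<partial>?P) \<le> real n * ((2 * K / real m)\<^sup>2 + 4 * (\<integral>y. y ^ 4 \<partial>\<mu>) / K\<^sup>2)"
    unfolding Q_sum(2) using quantize_error(2) by (rule mult_left_mono) simp
  have dev_int: "integrable ?P (dev j)" for j
    using integral_abs_count_dev_le(1)[OF \<mu> n] unfolding dev_def M_def .
  have dev_le: "(\<integral>x. dev j x \<partial>?P) \<le> 1 + sqrt (real n)" for j
    using integral_abs_count_dev_le(2)[OF \<mu> n] unfolding dev_def M_def .
  have D_int: "integrable ?P D"
    unfolding D_def using dev_int by auto
  have "(\<integral>x. D x \<partial>?P) = (\<Sum>j<m. \<integral>x. dev j x \<partial>?P)"
    unfolding D_def using dev_int by (simp add: Bochner_Integration.integral_sum)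
  also have "\<dots> \<le> real m * (1 + sqrt (real n))"
    using sum_mono[of "{..<m}", OF dev_le] by simp
  finally have D_le: "(\<integral>x. D x \<partial>?P) \<le> real m * (1 + sqrt (real n))" .
  define R where "R x = 2 * Q x + 4 * K * (2 * K / real m) * D x" for x
  have R_int: "integrable ?P R"
    unfolding R_def using Q_sum(1) D_int by simp
  have L_le: "L x \<le> R x" for x
    unfolding L_def R_def Q_def D_def dev_def c_def M_def by (rule sum_sq_order_stat_dev_le) (use K in simp)
  have "L \<in> borel_measurable ?P"
    unfolding L_def by measurable
  moreover have "norm (L x) \<le> norm (R x)" for x
    using L_le[of x] sum_nonneg[of "{..<n}" "\<lambda>i. (order_stat n x i - c i)\<^sup>2"]
    unfolding L_def by simp
  ultimately show L_int: "integrable ?P L"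
    using Bochner_Integration.integrable_bound[OF R_int] by blast
  have "(\<integral>x. L x \<partial>?P) \<le> (\<integral>x. R x \<partial>?P)"
    by (rule integral_mono[OF L_int R_int L_le])
  also have "\<dots> = 2 * (\<integral>x. Q x \<partial>?P) + 4 * K * (2 * K / real m) * (\<integral>x. D x \<partial>?P)"
    unfolding R_def using Q_sum(1) D_int by simp
  also have "\<dots> \<le> 2 * (real n * ((2 * K / real m)\<^sup>2 + 4 * (\<integral>y. y ^ 4 \<partial>\<mu>) / K\<^sup>2))
      + 4 * K * (2 * K / real m) * (real m * (1 + sqrt (real n)))"
    using Q_le D_le K m by (intro add_mono mult_left_mono) auto
  also have "\<dots> = 2 * real n * ((2 * K / real m)\<^sup>2 + 4 * (\<integral>y. y ^ 4 \<partial>\<mu>) / K\<^sup>2) + 8 * K\<^sup>2 * (1 + sqrt (real n))"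
    using m by (simp add: power2_eq_square)
  finally show "(\<integral>x. L x \<partial>?P) \<le> 2 * real n * ((2 * K / real m)\<^sup>2 + 4 * (\<integral>y. y ^ 4 \<partial>\<mu>) / K\<^sup>2) + 8 * K\<^sup>2 * (1 + sqrt (real n))" .
qed

lemma integrable_mult_if_square_integrable:
  fixes f g :: "'a \<Rightarrow> real"
  assumes [measurable]: "f \<in> borel_measurable M" "g \<in> borel_measurable M"
    and "integrable M (\<lambda>x. (f x)\<^sup>2)" "integrable M (\<lambda>x. (g x)\<^sup>2)"
  shows "integrable M (\<lambda>x. f x * g x)"
proof (rule Bochner_Integration.integrable_bound[OF Bochner_Integration.integrable_add[OF assms(3,4)]])
  have "\<bar>f x\<bar> * \<bar>g x\<bar> \<le> (f x)\<^sup>2 + (g x)\<^sup>2" for x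
  proof -
    have "2 * \<bar>f x\<bar> * \<bar>g x\<bar> \<le> (f x)\<^sup>2 + (g x)\<^sup>2"
      using sum_squares_bound[of "\<bar>f x\<bar>" "\<bar>g x\<bar>"] by simp
    moreover have "0 \<le> \<bar>f x\<bar> * \<bar>g x\<bar>" by simp
    ultimately show ?thesis by linarith
  qed
  then show "AE x in M. norm (f x * g x) \<le> norm ((f x)\<^sup>2 + (g x)\<^sup>2)"
    by (auto simp: abs_mult intro!: AE_I2)
qed measurable

text \<open>With E = E[V | F], the cross term of (V - c)^2 = (V - E)^2 + 2 (E - c)(V - E) + (E - c)^2
  integrates to zero because E - c is F-measurable.\<close>
lemma (in sigma_finite_subalgebra) cond_exp_sq_error_le:
  assumes "prob_space M" and [measurable]: "V \<in> borel_measurable M"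
    and V2: "integrable M (\<lambda>x. (V x)\<^sup>2)"
  shows "integrable M (\<lambda>x. (V x - real_cond_exp M F V x)\<^sup>2)"
    and "(\<integral>x. (V x - real_cond_exp M F V x)\<^sup>2 \<partial>M) \<le> (\<integral>x. (V x - c)\<^sup>2 \<partial>M)"
proof -
  interpret prob_space M by fact
  define E where "E = real_cond_exp M F V"
  have V_int: "integrable M V"
    using square_integrable_imp_integrable[OF _ V2] by simp
  have [measurable]: "E \<in> borel_measurable M"
    unfolding E_def by simp
  have E_F: "E \<in> borel_measurable F"
    unfolding E_def by simp
  have E2: "integrable M (\<lambda>x. (E x)\<^sup>2)"
    unfolding E_def
    by (rule integrable_convex_cond_exp[OF V_int, where I = UNIV and q = "\<lambda>x. x\<^sup>2"])
      (auto simp: V2 convex_power2)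
  have E_int: "integrable M E"
    using square_integrable_imp_integrable[OF _ E2] by simp
  have VE_int: "integrable M (\<lambda>x. V x * E x)"
    using V2 E2 by (intro integrable_mult_if_square_integrable) simp_all
  define f where "f x = E x - c" for x
  have f_F: "f \<in> borel_measurable F"
    unfolding f_def using E_F by simp
  have fV: "integrable M (\<lambda>x. f x * V x)"
    unfolding f_def using VE_int V_int by (simp add: algebra_simps)
  have fE: "integrable M (\<lambda>x. f x * E x)" and f2: "integrable M (\<lambda>x. (f x)\<^sup>2)"
    unfolding f_def using E2 E_int by (simp_all add: algebra_simps power2_eq_square)
  have "(\<lambda>x. (V x - E x)\<^sup>2) = (\<lambda>x. ((V x)\<^sup>2 + (E x)\<^sup>2) - 2 * (V x * E x))"
    by (simp add: fun_eq_iff power2_diff)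
  then have VE2: "integrable M (\<lambda>x. (V x - E x)\<^sup>2)"
    using V2 E2 VE_int by simp
  then show "integrable M (\<lambda>x. (V x - real_cond_exp M F V x)\<^sup>2)"
    unfolding E_def .
  have "(\<integral>x. f x * E x \<partial>M) = (\<integral>x. f x * V x \<partial>M)"
    unfolding E_def by (rule real_cond_exp_intg(2)[OF fV f_F]) simp
  moreover have "(V x - c)\<^sup>2 = (V x - E x)\<^sup>2 + (2 * (f x * V x) - 2 * (f x * E x) + (f x)\<^sup>2)" for x
    unfolding f_def by (simp add: algebra_simps power2_eq_square)
  ultimately have "(\<integral>x. (V x - c)\<^sup>2 \<partial>M) = (\<integral>x. (V x - E x)\<^sup>2 \<partial>M) + (\<integral>x. (f x)\<^sup>2 \<partial>M)"
    using VE2 fV fE f2 by simp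
  then show "(\<integral>x. (V x - real_cond_exp M F V x)\<^sup>2 \<partial>M) \<le> (\<integral>x. (V x - c)\<^sup>2 \<partial>M)"
    unfolding E_def by (simp add: integral_nonneg_AE)
qed

lemma sigma_finite_subalgebra_gen_sigma:
  assumes "prob_space M" "\<And>i. i < n \<Longrightarrow> U i \<in> borel_measurable M"
  shows "sigma_finite_subalgebra M (gen_sigma M n U)"
proof -
  let ?G = "{U i -` B \<inter> space M | i B. i < n \<and> B \<in> sets borel}"
  have "?G \<subseteq> Pow (space M)" "?G \<subseteq> sets M"
    using assms(2) by (auto simp: measurable_sets)
  then have "subalgebra M (gen_sigma M n U)"
    unfolding subalgebra_def gen_sigma_def by (simp add: sets.sigma_sets_subset)
  then have "finite_measure_subalgebra M (gen_sigma M n U)"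
    using assms(1) unfolding finite_measure_subalgebra_def finite_measure_subalgebra_axioms_def prob_space_def
    by blast
  then show ?thesis
    by (rule finite_measure_subalgebra_is_sigma_finite)
qed

lemma mmse_le_integral_sum_sq_const:
  assumes M: "prob_space M"
    and V: "\<And>i. i < n \<Longrightarrow> V i \<in> borel_measurable M" "\<And>i. i < n \<Longrightarrow> integrable M (\<lambda>\<omega>. (V i \<omega>)\<^sup>2)"
    and U: "\<And>i. i < n \<Longrightarrow> U i \<in> borel_measurable M"
  shows "mmse M n V U \<le> (\<integral>\<omega>. (\<Sum>i<n. (V i \<omega> - c i)\<^sup>2) \<partial>M)"
proof -
  interpret F: sigma_finite_subalgebra M "gen_sigma M n U"
    by (rule sigma_finite_subalgebra_gen_sigma[OF M U])
  interpret prob_space M by (rule M)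
  note err = F.cond_exp_sq_error_le[OF M V(1) V(2)]
  have const_int: "integrable M (\<lambda>\<omega>. (V i \<omega> - c i)\<^sup>2)" if "i < n" for i
  proof -
    have "(\<lambda>\<omega>. (V i \<omega> - c i)\<^sup>2) = (\<lambda>\<omega>. ((V i \<omega>)\<^sup>2 + (c i)\<^sup>2) - 2 * c i * V i \<omega>)"
      by (simp add: fun_eq_iff power2_diff)
    then show ?thesis
      using V[OF that] by (simp add: square_integrable_imp_integrable)
  qed
  have "mmse M n V U = (\<Sum>i<n. \<integral>\<omega>. (V i \<omega> - real_cond_exp M (gen_sigma M n U) (V i) \<omega>)\<^sup>2 \<partial>M)"
    unfolding mmse_def using err(1) by (simp add: Bochner_Integration.integral_sum)
  also have "\<dots> \<le> (\<Sum>i<n. \<integral>\<omega>. (V i \<omega> - c i)\<^sup>2 \<partial>M)"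
    using err(2) by (intro sum_mono) auto
  also have "\<dots> = (\<integral>\<omega>. (\<Sum>i<n. (V i \<omega> - c i)\<^sup>2) \<partial>M)"
    using const_int by (simp add: Bochner_Integration.integral_sum)
  finally show ?thesis .
qed

lemma mmse_nonneg: "0 \<le> mmse M n V U"
  unfolding mmse_def by (intro integral_nonneg_AE AE_I2 sum_nonneg) auto

lemma borel_measurable_sort_vec:
  assumes "i < n" "\<And>j. j < n \<Longrightarrow> V j \<in> borel_measurable M"
  shows "sort_vec n V i \<in> borel_measurable M"
  unfolding sort_vec_eq_order_stat using borel_measurable_order_stat[OF assms] .

lemma real_distribution_std_normal: "real_distribution std_normal"
  unfolding std_normal_def by (rule real_dist_normal_dist)

lemma integrable_std_normal_power: "integrable std_normal (\<lambda>y. y ^ k)"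
  unfolding std_normal_def by (rule integrable_std_normal_distribution_moment)

lemma integral_std_normal_power4: "(\<integral>y. y ^ 4 \<partial>std_normal) = 3"
  using std_normal_distribution_even_moments(1)[of 2] unfolding std_normal_def
  by (simp add: fact_numeral)

lemma prob_space_Omega: "prob_space (Omega n)"
  unfolding Omega_def
  by (intro prob_space_pair prob_space_PiM real_distribution.axioms(1)[OF real_distribution_std_normal])

lemma distr_Omega_fst: "distr (Omega n) (PiM {..<n} (\<lambda>_. std_normal)) fst = PiM {..<n} (\<lambda>_. std_normal)"
  unfolding Omega_def
  by (intro prob_space.distr_pair_fst prob_space_PiM real_distribution.axioms(1)[OF real_distribution_std_normal])

lemma borel_measurable_Xv: "j < n \<Longrightarrow> Xv j \<in> borel_measurable (Omega n)"
  unfolding Xv_def Omega_def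
  by (intro measurable_compose[OF measurable_fst] borel_measurable_PiM_component)
    (auto simp: std_normal_def)

lemma borel_measurable_Yv: "j < n \<Longrightarrow> Yv \<sigma> j \<in> borel_measurable (Omega n)"
proof -
  assume j: "j < n"
  have [measurable]: "(\<lambda>\<omega>. snd \<omega> j) \<in> borel_measurable (Omega n)"
    unfolding Omega_def using j
    by (intro measurable_compose[OF measurable_snd] borel_measurable_PiM_component)
      (auto simp: std_normal_def)
  have [measurable]: "(\<lambda>\<omega>. fst \<omega> j) \<in> borel_measurable (Omega n)"
    using borel_measurable_Xv[OF j] unfolding Xv_def .
  show ?thesis
    unfolding Yv_def by measurable
qed

lemma integrable_sq_sort_vec_Xv:
  assumes "i < n"
  shows "integrable (Omega n) (\<lambda>\<omega>. (sort_vec n Xv i \<omega>)\<^sup>2)"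
proof (rule Bochner_Integration.integrable_bound)
  let ?P = "PiM {..<n} (\<lambda>_. std_normal)"
  have "integrable ?P (\<lambda>x. \<Sum>k<n. (x k)\<^sup>2)"
    by (rule integral_sum_PiM_components(1)[OF real_distribution.axioms(1)[OF real_distribution_std_normal]
          integrable_std_normal_power])
  then show "integrable (Omega n) (\<lambda>\<omega>. \<Sum>k<n. (fst \<omega> k)\<^sup>2)"
    using integrable_distr_eq[OF measurable_fst[of ?P ?P, folded Omega_def], of "\<lambda>x. \<Sum>k<n. (x k)\<^sup>2"]
      distr_Omega_fst by simp
  show "(\<lambda>\<omega>. (sort_vec n Xv i \<omega>)\<^sup>2) \<in> borel_measurable (Omega n)"
    using borel_measurable_sort_vec[OF assms borel_measurable_Xv] by measurable
  have "(sort_vec n Xv i \<omega>)\<^sup>2 \<le> (\<Sum>j<n. (sort_vec n Xv j \<omega>)\<^sup>2)" for \<omega>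
    using assms by (intro member_le_sum) auto
  also have "(\<Sum>j<n. (sort_vec n Xv j \<omega>)\<^sup>2) = (\<Sum>k<n. (fst \<omega> k)\<^sup>2)" for \<omega>
    unfolding sort_vec_eq_order_stat Xv_def by (rule sum_order_stat)
  finally show "AE \<omega> in Omega n. norm ((sort_vec n Xv i \<omega>)\<^sup>2) \<le> norm (\<Sum>k<n. (fst \<omega> k)\<^sup>2)"
    by (simp add: sum_nonneg)
qed

lemma mmse_sort_Xv_le:
  assumes U: "\<And>i. i < n \<Longrightarrow> U i \<in> borel_measurable (Omega n)"
  shows "mmse (Omega n) n (sort_vec n Xv) U
    \<le> (\<integral>x. (\<Sum>i<n. (order_stat n x i - c i)\<^sup>2) \<partial>PiM {..<n} (\<lambda>_. std_normal))"
proof -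
  let ?P = "PiM {..<n} (\<lambda>_. std_normal)"
  have [measurable]: "(\<lambda>x. x k) \<in> borel_measurable ?P" if "k \<in> {..<n}" for k
    using that by (intro borel_measurable_PiM_component) (auto simp: std_normal_def)
  have "mmse (Omega n) n (sort_vec n Xv) U
      \<le> (\<integral>\<omega>. (\<Sum>i<n. (sort_vec n Xv i \<omega> - c i)\<^sup>2) \<partial>Omega n)"
    by (rule mmse_le_integral_sum_sq_const[OF prob_space_Omega])
      (use U in \<open>auto intro: integrable_sq_sort_vec_Xv borel_measurable_sort_vec borel_measurable_Xv\<close>)
  also have "\<dots> = (\<integral>\<omega>. (\<Sum>i<n. (order_stat n (fst \<omega>) i - c i)\<^sup>2) \<partial>Omega n)"
    by (simp add: sort_vec_eq_order_stat Xv_def)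
  also have "\<dots> = (\<integral>x. (\<Sum>i<n. (order_stat n x i - c i)\<^sup>2) \<partial>?P)"
    using integral_distr[OF measurable_fst[of ?P ?P, folded Omega_def], of "\<lambda>x. \<Sum>i<n. (order_stat n x i - c i)\<^sup>2"]
      distr_Omega_fst
    by simp
  finally show ?thesis .
qed

lemma mmse_sort_Xv_div_le:
  assumes U: "\<And>i. i < n \<Longrightarrow> U i \<in> borel_measurable (Omega n)" and n: "n > 0" and k: "k > 0"
  shows "mmse (Omega n) n (sort_vec n Xv) U / real n
    \<le> 26 / (real k)\<^sup>2 + 8 * (real k)\<^sup>2 * ((1 + sqrt (real n)) / real n)"
proof -
  have K: "real k > 0" and m: "2 * k\<^sup>2 > 0"
    using k by simp_all
  have "mmse (Omega n) n (sort_vec n Xv) U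
      \<le> 2 * real n * ((2 * real k / real (2 * k\<^sup>2))\<^sup>2 + 4 * 3 / (real k)\<^sup>2) + 8 * (real k)\<^sup>2 * (1 + sqrt (real n))"
    using mmse_sort_Xv_le[OF U] integral_sum_sq_order_stat_dev_le(2)[OF real_distribution_std_normal
        integrable_std_normal_power K m n]
    unfolding integral_std_normal_power4 by (rule order_trans)
  also have "\<dots> = real n * (26 / (real k)\<^sup>2 + 8 * (real k)\<^sup>2 * ((1 + sqrt (real n)) / real n))"
    using K n by (simp add: field_simps power2_eq_square)
  finally show ?thesis
    using n by (simp add: divide_le_eq mult.commute)
qed

lemma tendsto_zero_if_bounded_by_vanishing:
  fixes f a b g :: "nat \<Rightarrow> real"
  assumes f: "\<And>n. 0 \<le> f n" and bound: "\<And>k n. n > 0 \<Longrightarrow> f n \<le> a k + b k * g n"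
    and a: "a \<longlonglongrightarrow> 0" and g: "g \<longlonglongrightarrow> 0"
  shows "f \<longlonglongrightarrow> 0"
proof (rule tendstoI)
  fix e :: real
  assume e: "e > 0"
  obtain k where k: "a k < e / 2"
    using order_tendstoD(2)[OF a, of "e / 2"] e by (auto simp: eventually_sequentially)
  have "((\<lambda>n. b k * g n) \<longlongrightarrow> 0) sequentially"
    using tendsto_mult_left[OF g, of "b k"] by simp
  then have "eventually (\<lambda>n. b k * g n < e / 2) sequentially"
    using e by (intro order_tendstoD(2)) auto
  moreover have "eventually (\<lambda>n. n > 0) sequentially"
    by (simp add: eventually_gt_at_top)
  ultimately show "eventually (\<lambda>n. dist (f n) 0 < e) sequentially"
  proof eventually_elim
    case (elim n)
    then show ?case
      using bound[of n k] f[of n] k by simp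
  qed
qed

lemma mmse_sort_Xv_div_tendsto_0:
  assumes "\<And>n i. i < n \<Longrightarrow> U n i \<in> borel_measurable (Omega n)"
  shows "(\<lambda>n. mmse (Omega n) n (sort_vec n Xv) (U n) / real n) \<longlonglongrightarrow> 0"
proof (rule tendsto_zero_if_bounded_by_vanishing)
  show "0 \<le> mmse (Omega n) n (sort_vec n Xv) (U n) / real n" for n
    by (simp add: mmse_nonneg)
  show "mmse (Omega n) n (sort_vec n Xv) (U n) / real n
      \<le> 26 / (real (Suc k))\<^sup>2 + 8 * (real (Suc k))\<^sup>2 * ((1 + sqrt (real n)) / real n)"
    if "n > 0" for k n
    using assms that by (intro mmse_sort_Xv_div_le) auto
  show "(\<lambda>k. 26 / (real (Suc k))\<^sup>2) \<longlonglongrightarrow> 0"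
    by real_asymp
  show "(\<lambda>n. (1 + sqrt (real n)) / real n) \<longlonglongrightarrow> 0"
    by real_asymp
qed

theorem corollary1:
  fixes \<sigma> :: real
  assumes "\<sigma> > 0"
  shows "((\<lambda>n. mmse (Omega n) n (sort_vec n Xv) (sort_vec n (Yv \<sigma>)) / real n) \<longlongrightarrow> 0) sequentially
       \<and> ((\<lambda>n. mmse (Omega n) n (sort_vec n Xv) (Yv \<sigma>) / real n) \<longlongrightarrow> 0) sequentially"
proof
  show "((\<lambda>n. mmse (Omega n) n (sort_vec n Xv) (sort_vec n (Yv \<sigma>)) / real n) \<longlongrightarrow> 0) sequentially"
    by (rule mmse_sort_Xv_div_tendsto_0) (intro borel_measurable_sort_vec borel_measurable_Yv)
  show "((\<lambda>n. mmse (Omega n) n (sort_vec n Xv) (Yv \<sigma>) / real n) \<longlongrightarrow> 0) sequentially"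
    by (rule mmse_sort_Xv_div_tendsto_0) (rule borel_measurable_Yv)
qed

end
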